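(* Consider a storage system in which each object $f_i$ can be downloaded either from its systematic server or from any one of $t$ disjoint recovery groups, each consisting of $r$ servers, under the Fork-Join access model, with all service times i.i.d. $\mathrm{Exp}(\mu)$. Under the low-traffic regime, the download time $T_{\text{FJ-}(r,t)}$ of a request satisfies, for all $s \ge 0$, $$\Pr\{T_{\text{FJ-}(r,t)} > s\} = e^{-\mu s}\left(1 - (1 - e^{-\mu s})^r\right)^t,$$ and $$\mathbb{E}[T_{\text{FJ-}(r,t)}] = \frac{1}{\mu r}\,\beta\!\left(t+1, \frac{1}{r}\right),$$ where $\beta(x,y)=\int_0^1 v^{x-1}(1-v)^{y-1}\,dv$ is the beta function.
   Context: Storage model: $k$ objects $f_1,\dots,f_k$ (symbols of a finite field) are encoded by a systematic $(n,k)$ linear code and the $n$ coded symbols are stored on $n$ distinct servers. The code has $(r,t)$-availability: for each systematic server $i$ (storing $f_i$) there are $t$ pairwise disjoint recovery groups, each a set of $r$ servers not containing server $i$, such that $f_i$ can be recovered from the contents of any one recovery group. Fork-Join access model: when a request for $f_i$ arrives, it is replicated into $t+1$ copies, one sent to systematic server $i$ and one to each of the $t$ recovery groups; a copy sent to a recovery group is forked into $r$ sub-copies, one to each server of the group, and that copy completes when all $r$ sub-copies have finished service. The request completes as soon as either its copy at the systematic server finishes or its copy at some recovery group completes; all its remaining copies are then immediately removed at no cost. Each server serves one (sub-)copy at a time, and service times are independent across servers and copies, each distributed as $\mathrm{Exp}(\mu)$. The download time of a request is its departure time minus its arrival time. Low-traffic regime: each request is completed before the next request arrives, so at most one request is in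 the system at any time. *)

theory Defs
  imports "HOL-Probability.Probability"
begin

text \<open>Index set of the service-time variables of one request under the Fork-Join
  model: None is the copy at the systematic server, Some (j, l) is the sub-copy at
  server l of recovery group j (j < t, l < r).\<close>
definition fj_index :: "nat \<Rightarrow> nat \<Rightarrow> (nat \<times> nat) option set" where
  "fj_index r t = insert None (Some ` ({..<t} \<times> {..<r}))"

text \<open>Download time of the (single, low-traffic) request: the copy at the systematic
  server finishes at X None; recovery group j completes when all its r sub-copies
  finish, i.e. at the maximum; the request completes at the first completion.\<close>
definition fj_time :: "nat \<Rightarrow> nat \<Rightarrow> ((nat \<times> nat) option \<Rightarrow> 'a \<Rightarrow> real) \<Rightarrow> 'a \<Rightarrow> real" where
  "fj_time r t X \<omega> =
     Min (insert (X None \<omega>) ((\<lambda>j. Max ((\<lambda>l. X (Some (j, l)) \<omega>) ` {..<r})) ` {..<t}))"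

end

theory Submission
  imports Defs
begin

text \<open>The request is still pending at time s iff the systematic copy and every recovery
  group are still busy at s. These t + 1 branches use disjoint sets of servers, so they are
  independent, and a group is busy iff not all of its r servers are done; this gives
  P(T > s) = e^{-\<mu>s} (1 - (1 - e^{-\<mu>s})^r)^t. The mean is the integral of this tail over
  (0, \<infinity>) (Tonelli), and the substitution v = (1 - e^{-\<mu>s})^r, the probability that a fixed
  group is done by time s, turns it into (\<mu>r)^{-1} \<integral>_0^1 v^{1/r - 1} (1 - v)^t dv.\<close>

lemma (in sigma_finite_measure) nn_integral_layer_cake:
  assumes [measurable]: "T \<in> borel_measurable M"
  shows "(\<integral>\<^sup>+\<omega>. ennreal (T \<omega>) \<partial>M)
    = (\<integral>\<^sup>+s. indicator {0<..} s * emeasure M {\<omega> \<in> space M. s < T \<omega>} \<partial>lborel)"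
proof -
  have "ennreal (T \<omega>) = (\<integral>\<^sup>+s. indicator {0<..<T \<omega>} s \<partial>lborel)" for \<omega>
    by (cases "0 \<le> T \<omega>") (simp_all add: ennreal_neg)
  then have "(\<integral>\<^sup>+\<omega>. ennreal (T \<omega>) \<partial>M) = (\<integral>\<^sup>+\<omega>. \<integral>\<^sup>+s. indicator {0<..<T \<omega>} s \<partial>lborel \<partial>M)"
    by simp
  also have "\<dots> = (\<integral>\<^sup>+s. \<integral>\<^sup>+\<omega>. indicator {0<..<T \<omega>} s \<partial>M \<partial>lborel)"
    by (rule pair_sigma_finite.Fubini') (unfold_locales, unfold indicator_def greaterThanLessThan_iff, measurable)
  also have "\<dots> = (\<integral>\<^sup>+s. indicator {0<..} s * emeasure M {\<omega> \<in> space M. s < T \<omega>} \<partial>lborel)"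
  proof (intro nn_integral_cong)
    fix s :: real
    have "(\<integral>\<^sup>+\<omega>. indicator {0<..<T \<omega>} s \<partial>M)
        = (\<integral>\<^sup>+\<omega>. indicator {0<..} s * indicator {\<omega> \<in> space M. s < T \<omega>} \<omega> \<partial>M)"
      by (intro nn_integral_cong) (auto split: split_indicator)
    then show "(\<integral>\<^sup>+\<omega>. indicator {0<..<T \<omega>} s \<partial>M) = indicator {0<..} s * emeasure M {\<omega> \<in> space M. s < T \<omega>}"
      by (simp add: nn_integral_cmult)
  qed
  finally show ?thesis .
qed

lemma (in prob_space) has_bochner_integral_tail:
  assumes [measurable]: "T \<in> borel_measurable M"
    and nonneg: "AE \<omega> in M. 0 \<le> T \<omega>"
    and tail: "\<And>s. 0 < s \<Longrightarrow> prob {\<omega> \<in> space M. s < T \<omega>} = G s"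
    and G: "set_integrable lborel {0<..} G"
  shows "has_bochner_integral M T (LINT s:{0<..}|lborel. G s)"
proof (rule has_bochner_integral_nn_integral)
  have G_nonneg: "0 \<le> indicator {0<..} s * G s" for s :: real
    using tail[of s, symmetric] by (auto split: split_indicator)
  then show "0 \<le> (LINT s:{0<..}|lborel. G s)"
    unfolding set_lebesgue_integral_def by (simp add: integral_nonneg)
  have "(\<integral>\<^sup>+\<omega>. ennreal (T \<omega>) \<partial>M) = (\<integral>\<^sup>+s. ennreal (indicator {0<..} s * G s) \<partial>lborel)"
    unfolding nn_integral_layer_cake[OF assms(1)]
    by (intro nn_integral_cong) (auto simp: emeasure_eq_measure tail split: split_indicator)
  also have "\<dots> = ennreal (LINT s:{0<..}|lborel. G s)"
    using G G_nonneg unfolding set_integrable_def set_lebesgue_integral_def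
    by (simp add: nn_integral_eq_integral)
  finally show "(\<integral>\<^sup>+\<omega>. ennreal (T \<omega>) \<partial>M) = ennreal (LINT s:{0<..}|lborel. G s)" .
qed (use nonneg in auto)

lemma (in prob_space) prob_Min_gt_indep:
  fixes X :: "'i \<Rightarrow> 'a \<Rightarrow> real"
  assumes indep: "indep_vars (\<lambda>_. borel) X I" and "finite I" "I \<noteq> {}"
  shows "prob {\<omega> \<in> space M. s < Min ((\<lambda>i. X i \<omega>) ` I)} = (\<Prod>i\<in>I. prob {\<omega> \<in> space M. s < X i \<omega>})"
proof -
  have "{\<omega> \<in> space M. s < Min ((\<lambda>i. X i \<omega>) ` I)} = (\<Inter>i\<in>I. X i -` {s<..} \<inter> space M)"
    using assms(2,3) by auto
  then show ?thesis
    using indep_varsD_finite[OF indep assms(3,2), of "\<lambda>_. {s<..}"] by (simp add: vimage_def Int_def conj_commute)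
qed

lemma (in prob_space) prob_Max_le_indep:
  fixes X :: "'i \<Rightarrow> 'a \<Rightarrow> real"
  assumes indep: "indep_vars (\<lambda>_. borel) X I" and "finite I" "I \<noteq> {}"
  shows "prob {\<omega> \<in> space M. Max ((\<lambda>i. X i \<omega>) ` I) \<le> s} = (\<Prod>i\<in>I. prob {\<omega> \<in> space M. X i \<omega> \<le> s})"
proof -
  have "{\<omega> \<in> space M. Max ((\<lambda>i. X i \<omega>) ` I) \<le> s} = (\<Inter>i\<in>I. X i -` {..s} \<inter> space M)"
    using assms(2,3) by auto
  then show ?thesis
    using indep_varsD_finite[OF indep assms(3,2), of "\<lambda>_. {..s}"] by (simp add: vimage_def Int_def conj_commute)
qed

definition fj_branches :: "nat \<Rightarrow> nat option set" where
  "fj_branches t = insert None (Some ` {..<t})"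

definition fj_branch_index :: "nat \<Rightarrow> nat option \<Rightarrow> (nat \<times> nat) option set" where
  "fj_branch_index r k = (case k of None \<Rightarrow> {None} | Some j \<Rightarrow> (\<lambda>l. Some (j, l)) ` {..<r})"

definition fj_branch_time :: "nat \<Rightarrow> ((nat \<times> nat) option \<Rightarrow> 'a \<Rightarrow> real) \<Rightarrow> nat option \<Rightarrow> 'a \<Rightarrow> real" where
  "fj_branch_time r X k \<omega> = Max ((\<lambda>i. X i \<omega>) ` fj_branch_index r k)"

lemma fj_branch_index_subset: "k \<in> fj_branches t \<Longrightarrow> fj_branch_index r k \<subseteq> fj_index r t"
  by (auto simp: fj_branches_def fj_branch_index_def fj_index_def)

lemma fj_branch_index_nonempty: "1 \<le> r \<Longrightarrow> fj_branch_index r k \<noteq> {}"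
  by (cases k) (auto simp: fj_branch_index_def lessThan_empty_iff)

lemma fj_time_eq_Min_branch_time:
  "fj_time r t X \<omega> = Min ((\<lambda>k. fj_branch_time r X k \<omega>) ` fj_branches t)"
  by (simp add: fj_time_def fj_branch_time_def fj_branches_def fj_branch_index_def image_image)

lemma (in prob_space) indep_vars_fj_branch_time:
  assumes indep: "indep_vars (\<lambda>_. borel) X (fj_index r t)"
  shows "indep_vars (\<lambda>_. borel) (fj_branch_time r X) (fj_branches t)"
proof -
  have "disjoint_family_on (fj_branch_index r) (fj_branches t)"
    by (auto simp: disjoint_family_on_def fj_branches_def fj_branch_index_def)
  from indep_vars_restrict[OF indep fj_branch_index_subset this]
  have "indep_vars (\<lambda>_. borel)
      (\<lambda>k \<omega>. Max ((\<lambda>i. restrict (\<lambda>i. X i \<omega>) (fj_branch_index r k) i) ` fj_branch_index r k)) (fj_branches t)"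
    by (rule indep_vars_compose2[where Y = "\<lambda>k f. Max ((\<lambda>i. f i) ` fj_branch_index r k)"])
      (auto intro!: borel_measurable_Max measurable_component_singleton simp: fj_branch_index_def split: option.split)
  then show ?thesis
    by (rule indep_vars_cong[THEN iffD1, rotated 3]) (auto simp: fj_branch_time_def fun_eq_iff)
qed

lemma card_fj_branch_index:
  "card (fj_branch_index r None) = 1" "card (fj_branch_index r (Some j)) = r"
  by (simp_all add: fj_branch_index_def card_image inj_on_def)

context
  fixes M :: "'a measure" and X :: "(nat \<times> nat) option \<Rightarrow> 'a \<Rightarrow> real"
    and \<mu> :: real and r t :: nat
  assumes prob_space: "prob_space M"
    and \<mu>: "0 < \<mu>" and r: "1 \<le> r"
    and indep: "prob_space.indep_vars M (\<lambda>_. borel) X (fj_index r t)"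
    and exponential: "\<And>i. i \<in> fj_index r t \<Longrightarrow> distributed M lborel (X i) (exponential_density \<mu>)"
begin

interpretation prob_space M by (fact prob_space)

lemma prob_fj_branch_time_gt:
  assumes k: "k \<in> fj_branches t" and s: "0 \<le> s"
  shows "prob {\<omega> \<in> space M. s < fj_branch_time r X k \<omega>}
    = 1 - (1 - exp (- \<mu> * s)) ^ card (fj_branch_index r k)"
proof -
  let ?I = "fj_branch_index r k"
  have I: "finite ?I" "?I \<noteq> {}" "?I \<subseteq> fj_index r t"
    using fj_branch_index_nonempty[OF r] fj_branch_index_subset[OF k]
    by (auto simp: fj_branch_index_def split: option.split)
  have exp_le: "prob {\<omega> \<in> space M. X i \<omega> \<le> s} = 1 - exp (- \<mu> * s)" if "i \<in> ?I" for i
    using exponential_distributedD_le[OF exponential s \<mu>] I(3) that by (auto simp: mult.commute)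
  have "prob {\<omega> \<in> space M. s < fj_branch_time r X k \<omega>}
      = 1 - prob {\<omega> \<in> space M. Max ((\<lambda>i. X i \<omega>) ` ?I) \<le> s}"
  proof -
    have "(\<lambda>\<omega>. Max ((\<lambda>i. X i \<omega>) ` ?I)) \<in> borel_measurable M"
      using I by (intro borel_measurable_Max) (use indep I(3) in \<open>auto simp: indep_vars_def\<close>)
    then have "{\<omega> \<in> space M. Max ((\<lambda>i. X i \<omega>) ` ?I) \<le> s} \<in> events"
      by measurable
    then have "prob (space M - {\<omega> \<in> space M. Max ((\<lambda>i. X i \<omega>) ` ?I) \<le> s})
        = 1 - prob {\<omega> \<in> space M. Max ((\<lambda>i. X i \<omega>) ` ?I) \<le> s}"
      by (rule prob_compl)
    moreover have "space M - {\<omega> \<in> space M. Max ((\<lambda>i. X i \<omega>) ` ?I) \<le> s}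
        = {\<omega> \<in> space M. s < fj_branch_time r X k \<omega>}"
      by (auto simp: fj_branch_time_def)
    ultimately show ?thesis
      by simp
  qed
  also have "\<dots> = 1 - (\<Prod>i\<in>?I. prob {\<omega> \<in> space M. X i \<omega> \<le> s})"
    using prob_Max_le_indep[OF indep_vars_subset[OF indep I(3)] I(1,2)] by simp
  also have "\<dots> = 1 - (1 - exp (- \<mu> * s)) ^ card ?I"
    by (simp add: exp_le)
  finally show ?thesis .
qed

lemma fj_time_measurable: "fj_time r t X \<in> borel_measurable M"
proof -
  have "fj_branch_time r X k \<in> borel_measurable M" if "k \<in> fj_branches t" for k
    using indep_vars_fj_branch_time[OF indep] that by (auto simp: indep_vars_def)
  then show ?thesis
    unfolding fj_time_eq_Min_branch_time[abs_def]
    by (intro borel_measurable_Min) (auto simp: fj_branches_def)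
qed

lemma prob_fj_time_gt:
  assumes s: "0 \<le> s"
  shows "prob {\<omega> \<in> space M. s < fj_time r t X \<omega>} = exp (- \<mu> * s) * (1 - (1 - exp (- \<mu> * s)) ^ r) ^ t"
proof -
  have "prob {\<omega> \<in> space M. s < fj_time r t X \<omega>}
      = (\<Prod>k\<in>fj_branches t. prob {\<omega> \<in> space M. s < fj_branch_time r X k \<omega>})"
    unfolding fj_time_eq_Min_branch_time
    by (rule prob_Min_gt_indep[OF indep_vars_fj_branch_time[OF indep]]) (auto simp: fj_branches_def)
  also have "\<dots> = (\<Prod>k\<in>fj_branches t. 1 - (1 - exp (- \<mu> * s)) ^ card (fj_branch_index r k))"
    using prob_fj_branch_time_gt[OF _ s] by simp
  also have "\<dots> = exp (- \<mu> * s) * (1 - (1 - exp (- \<mu> * s)) ^ r) ^ t"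
    by (simp add: fj_branches_def prod.reindex card_fj_branch_index)
  finally show ?thesis .
qed

lemma AE_fj_time_nonneg: "AE \<omega> in M. 0 \<le> fj_time r t X \<omega>"
proof -
  have "prob {\<omega> \<in> space M. 0 < fj_time r t X \<omega>} = 1"
    using prob_fj_time_gt[of 0] r by (simp add: power_0_left)
  from AE_prob_1[OF this] show ?thesis
    by eventually_elim simp
qed

end

definition fj_tail :: "real \<Rightarrow> nat \<Rightarrow> nat \<Rightarrow> real \<Rightarrow> real" where
  "fj_tail \<mu> r t s = exp (- \<mu> * s) * (1 - (1 - exp (- \<mu> * s)) ^ r) ^ t"

lemma fj_tail_bounds:
  assumes "0 \<le> \<mu> * s"
  shows "0 \<le> fj_tail \<mu> r t s" and "fj_tail \<mu> r t s \<le> exp (- \<mu> * s)"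
proof -
  have "0 \<le> 1 - exp (- \<mu> * s)" "1 - exp (- \<mu> * s) \<le> 1"
    using assms by auto
  then have "0 \<le> 1 - (1 - exp (- \<mu> * s)) ^ r" "1 - (1 - exp (- \<mu> * s)) ^ r \<le> 1"
    by (auto simp: power_le_one)
  then have "0 \<le> (1 - (1 - exp (- \<mu> * s)) ^ r) ^ t" "(1 - (1 - exp (- \<mu> * s)) ^ r) ^ t \<le> 1"
    by (auto simp: power_le_one)
  then show "0 \<le> fj_tail \<mu> r t s" "fj_tail \<mu> r t s \<le> exp (- \<mu> * s)"
    by (auto simp: fj_tail_def mult_left_le)
qed

lemma integrable_exponential_density:
  assumes "0 < \<mu>"
  shows "integrable lborel (exponential_density \<mu>)"
proof (rule integrableI_nn_integral_finite[where x = 1])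
  show "(\<integral>\<^sup>+s. ennreal (exponential_density \<mu> s) \<partial>lborel) = ennreal 1"
    using nn_integral_erlang_ith_moment[OF assms, of 0 0] by simp
qed (use assms in \<open>auto simp: exponential_density_nonneg\<close>)

lemma set_integrable_fj_tail:
  assumes "0 < \<mu>"
  shows "set_integrable lborel {0<..} (fj_tail \<mu> r t)"
  unfolding set_integrable_def
proof (rule Bochner_Integration.integrable_bound)
  show "integrable lborel (\<lambda>s. exponential_density \<mu> s / \<mu>)"
    using integrable_exponential_density[OF assms] by simp
  show "(\<lambda>s. indicator {0<..} s *\<^sub>R fj_tail \<mu> r t s) \<in> borel_measurable lborel"
    unfolding fj_tail_def by measurable
  show "AE s in lborel. norm (indicator {0<..} s *\<^sub>R fj_tail \<mu> r t s) \<le> norm (exponential_density \<mu> s / \<mu>)"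
    using fj_tail_bounds[of \<mu>] assms
    by (intro AE_I2) (auto simp: exponential_density_def mult.commute split: split_indicator)
qed

lemma fj_tail_eq_beta_substitution:
  assumes \<mu>: "0 < \<mu>" and s: "0 < s" and r: "1 \<le> r"
  defines "q \<equiv> 1 - exp (- \<mu> * s)"
  shows "fj_tail \<mu> r t s
    = (q ^ r) powr (1 / real r - 1) * (1 - q ^ r) powr real t / (\<mu> * real r)
      * (real r * q ^ (r - 1) * (\<mu> * exp (- \<mu> * s)))"
proof -
  have q: "0 < q" "q < 1"
    using \<mu> s by (auto simp: q_def)
  have "real r * (1 / real r - 1) = 1 - real r"
    using r by (simp add: field_simps)
  then have "(q ^ r) powr (1 / real r - 1) * q ^ (r - 1) = q powr (1 - real r) * q powr real (r - 1)"
    using q by (simp add: powr_realpow[symmetric] powr_powr)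
  also have "\<dots> = 1"
    using q r by (simp add: powr_add[symmetric] of_nat_diff)
  finally have cancel: "(q ^ r) powr (1 / real r - 1) * q ^ (r - 1) = 1" .
  have "0 < 1 - q ^ r"
    using q r by (simp add: power_less_one_iff)
  then have "(1 - q ^ r) powr real t = (1 - q ^ r) ^ t"
    by (simp add: powr_realpow)
  then show ?thesis
    using \<mu> r cancel by (simp add: fj_tail_def q_def field_simps)
qed

lemma LBINT_fj_tail:
  assumes \<mu>: "0 < \<mu>" and r: "1 \<le> r"
  shows "(LINT s:{0<..}|lborel. fj_tail \<mu> r t s) = 1 / (\<mu> * real r) * Beta (real t + 1) (1 / real r)"
proof -
  define g where "g s = (1 - exp (- \<mu> * s)) ^ r" for s :: real
  define g' where "g' s = real r * (1 - exp (- \<mu> * s)) ^ (r - 1) * (\<mu> * exp (- \<mu> * s))" for s :: real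
  define f where "f v = v powr (1 / real r - 1) * (1 - v) powr real t / (\<mu> * real r)" for v :: real
  have fg: "fj_tail \<mu> r t s = f (g s) * g' s" if "0 < s" for s
    using fj_tail_eq_beta_substitution[OF \<mu> that r] by (simp add: f_def g_def g'_def)
  have pos: "einterval 0 \<infinity> = {0::real<..}" and unit: "einterval 0 1 = {0::real<..<1}"
    by (auto simp: einterval_def zero_ereal_def)
  have exp_decay: "((\<lambda>s. exp (- \<mu> * s)) \<longlongrightarrow> 0) at_top"
    using \<mu> by (auto intro!: exp_at_bot[THEN filterlim_compose] filterlim_tendsto_pos_mult_at_top
        filterlim_ident simp: filterlim_uminus_at_bot)
  have g_deriv: "DERIV g s :> g' s" for s
    unfolding g_def g'_def by (auto intro!: derivative_eq_intros simp: field_simps)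
  have f_cont: "isCont f (g s)" if "0 < ereal s" "ereal s < \<infinity>" for s
  proof -
    have "exp (- \<mu> * s) < 1"
      using \<mu> that by simp
    then have "0 < g s" "g s < 1"
      using r by (auto simp: g_def power_less_one_iff)
    then show ?thesis
      unfolding f_def using \<mu> r by (auto intro!: continuous_intros)
  qed
  have g'_cont: "isCont g' s" for s
    unfolding g'_def by (auto intro!: continuous_intros)
  have f_nonneg: "0 \<le> f (g s)" for s
    unfolding f_def using \<mu> by simp
  have g'_nonneg: "0 \<le> g' s" if "0 \<le> ereal s" for s
    using \<mu> that by (simp add: g'_def)
  have g_at_0: "((ereal \<circ> g \<circ> real_of_ereal) \<longlongrightarrow> 0) (at_right 0)"
    unfolding zero_ereal_def ereal_tendsto_simps g_def using r
    by (auto intro!: tendsto_eq_intros)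
  have g_at_top: "((ereal \<circ> g \<circ> real_of_ereal) \<longlongrightarrow> 1) (at_left \<infinity>)"
    unfolding one_ereal_def ereal_tendsto_simps g_def
    by (intro filterlim_compose[OF _ exp_decay]) (auto intro!: tendsto_eq_intros filterlim_ident)
  have fg_integrable: "set_integrable lborel (einterval 0 \<infinity>) (\<lambda>s. f (g s) * g' s)"
    using set_integrable_fj_tail[OF \<mu>, of r t] fg
      set_integrable_cong[of lborel lborel "{0<..}" "{0<..}" "fj_tail \<mu> r t" "\<lambda>s. f (g s) * g' s"]
    unfolding pos by simp
  note substitution = interval_integral_substitution_nonneg[of 0 \<infinity> g g' f 0 1,
      OF _ g_deriv f_cont g'_cont f_nonneg g'_nonneg g_at_0 g_at_top fg_integrable]
  have f_integrable: "set_integrable lborel {0<..<1} f"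
    using substitution(1) unfolding unit by simp
  have "(LINT v:{0<..<1}|lborel. f v) = (LINT s:{0<..}|lborel. f (g s) * g' s)"
    using substitution(2) unfolding interval_lebesgue_integral_def pos unit by simp
  also have "\<dots> = (LINT s:{0<..}|lborel. fj_tail \<mu> r t s)"
    by (rule set_lebesgue_integral_cong) (auto simp: fg)
  finally have "(LINT s:{0<..}|lborel. fj_tail \<mu> r t s) = integral {0<..<1} f"
    using set_borel_integral_eq_integral(2)[OF f_integrable] by simp
  moreover have "(f has_integral Beta (1 / real r) (real t + 1) / (\<mu> * real r)) {0<..<1}"
    using has_integral_Beta_real[of "1 / real r" "real t + 1"] r
    unfolding f_def has_integral_Icc_iff_Ioo by (auto intro!: has_integral_divide)
  ultimately show ?thesis
    by (simp add: integral_unique Beta_commute)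
qed

theorem theorem1:
  fixes M :: "'a measure" and X :: "(nat \<times> nat) option \<Rightarrow> 'a \<Rightarrow> real"
    and \<mu> :: real and r t :: nat
  assumes "prob_space M"
    and "0 < \<mu>" and "1 \<le> r"
    and "prob_space.indep_vars M (\<lambda>_. borel) X (fj_index r t)"
    and "\<And>i. i \<in> fj_index r t \<Longrightarrow> distributed M lborel (X i) (exponential_density \<mu>)"
  shows "(\<forall>s\<ge>0. measure M {\<omega> \<in> space M. fj_time r t X \<omega> > s}
            = exp (- \<mu> * s) * (1 - (1 - exp (- \<mu> * s)) ^ r) ^ t)
     \<and> integrable M (fj_time r t X)
     \<and> integral\<^sup>L M (fj_time r t X) = 1 / (\<mu> * real r) * Beta (real t + 1) (1 / real r)"
proof -
  interpret prob_space M by fact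
  have tail: "prob {\<omega> \<in> space M. s < fj_time r t X \<omega>} = fj_tail \<mu> r t s" if "0 \<le> s" for s
    using prob_fj_time_gt[OF assms that] by (simp add: fj_tail_def)
  have "has_bochner_integral M (fj_time r t X) (LINT s:{0<..}|lborel. fj_tail \<mu> r t s)"
    using fj_time_measurable[OF assms] AE_fj_time_nonneg[OF assms] tail
      set_integrable_fj_tail[OF assms(2)]
    by (rule has_bochner_integral_tail) auto
  then show ?thesis
    using tail LBINT_fj_tail[OF assms(2,3)]
    by (simp add: has_bochner_integral_iff fj_tail_def)
qed

end
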